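(* Fix $q\in(0,1]$. For every $d\ge1$, $\bar\sigma_{1,q}^2(2,d)=q/d$, and for fixed $s\in(0,2]$, as $d\to\infty$, $$\bar\sigma_{1,q}^2(s,d)=\frac qd+\frac{(3-q)(2-s)}{4d^2}+o\Big(\frac1{d^2}\Big).$$
   Context: For $q\in(0,1]$, integer $d\ge1$ and $s>0$: $h_d(t)=\binom dtq^t(1-q)^{d-t}$, $I_{1,q}(s,d)=q^{-s}2^{s/2}\sum_{t=1}^dh_d(t)\Gamma(t/2+s/2)/\Gamma(t/2)$, and $\bar\sigma_{1,q}(s,d)=I_{1,q}(s,d)^{-1/s}$. (This is the critical weight standard deviation preserving $\mathbb E\|x^{(k)}\|^s$ for the zero-bias width-$d$ linear network $x^{(k+1)}=(W^{(k+1)}x^{(k)})\odot\varepsilon^{(k+1)}$ with i.i.d. $\mathcal N(0,\sigma^2)$ weights and dropout vectors with i.i.d. components equal to $0$ w.p. $1-q$ and $1/q$ w.p. $q$.) *)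

theory Defs
  imports "HOL-Analysis.Analysis" "HOL-Library.Landau_Symbols"
begin

definition h_bin :: "real \<Rightarrow> nat \<Rightarrow> nat \<Rightarrow> real" where
  "h_bin q d t = real (d choose t) * q ^ t * (1 - q) ^ (d - t)"

definition I1q :: "real \<Rightarrow> real \<Rightarrow> nat \<Rightarrow> real" where
  "I1q q s d = q powr (-s) * 2 powr (s / 2) *
     (\<Sum>t=1..d. h_bin q d t * Gamma (real t / 2 + s / 2) / Gamma (real t / 2))"

definition sigma_bar :: "real \<Rightarrow> real \<Rightarrow> nat \<Rightarrow> real" where
  "sigma_bar q s d = I1q q s d powr (-1 / s)"

end

theory Submission
  imports Defs
begin

text \<open>Write \<open>s = 2 a\<close> with \<open>0 < a < 1\<close>, let \<open>t\<close> be binomial with \<open>d\<close> trials and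
  success probability \<open>q\<close>, put \<open>m = d q\<close> and \<open>c = a (1 - a) / 2\<close>. Since
  \<open>sigma_bar\<^sup>2 = I1q q s d powr (-1/a)\<close>, the expansion follows from
  \<open>d ((q / d) powr a * I1q q s d - 1) \<longrightarrow> - c (3 - q) / q\<close>.
  Log-convexity of \<open>Gamma\<close> (Wendel's inequalities, sharpened by telescoping) gives
  \<open>2 powr a * Gamma (t/2 + a) / Gamma (t/2) = t powr a - 2 c t powr (a - 1) + O(t powr (a - 2))\<close>.
  Expanding \<open>x powr a\<close> to second order at \<open>x = t / m = 1\<close> and controlling the remainder by the
  second and fourth central binomial moments gives \<open>E (t / m) powr a = 1 - c (1 - q) / m + o(1 / m)\<close>,
  while the \<open>t powr (a - 1)\<close> term contributes \<open>- 2 c / m\<close>, so that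
  \<open>(q / d) powr a * I1q q s d = 1 - c (3 - q) / m + o(1 / m)\<close>.
  For \<open>s = 2\<close>, \<open>Gamma (x + 1) = x Gamma x\<close> makes \<open>I1q q 2 d = d / q\<close> exact.\<close>

section \<open>Binomial expectations\<close>

definition binomial_expectation :: "real \<Rightarrow> nat \<Rightarrow> (nat \<Rightarrow> real) \<Rightarrow> real" where
  "binomial_expectation q d f = (\<Sum>t\<le>d. h_bin q d t * f t)"

lemma binomial_expectation_add:
    "binomial_expectation q d (\<lambda>t. f t + g t) = binomial_expectation q d f + binomial_expectation q d g"
  and binomial_expectation_diff:
    "binomial_expectation q d (\<lambda>t. f t - g t) = binomial_expectation q d f - binomial_expectation q d g"
  and binomial_expectation_cmult:
    "binomial_expectation q d (\<lambda>t. c * f t) = c * binomial_expectation q d f"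
  unfolding binomial_expectation_def
  by (simp_all add: sum.distrib sum_subtractf sum_distrib_left algebra_simps)

lemmas binomial_expectation_linear =
  binomial_expectation_add binomial_expectation_diff binomial_expectation_cmult

lemma binomial_expectation_cong:
  "(\<And>t. t \<le> d \<Longrightarrow> f t = g t) \<Longrightarrow> binomial_expectation q d f = binomial_expectation q d g"
  unfolding binomial_expectation_def by (intro sum.cong) auto

lemma h_bin_nonneg: "0 \<le> q \<Longrightarrow> q \<le> 1 \<Longrightarrow> 0 \<le> h_bin q d t"
  unfolding h_bin_def by simp

lemma binomial_expectation_mono:
  assumes "0 \<le> q" "q \<le> 1" "\<And>t. t \<le> d \<Longrightarrow> f t \<le> g t"
  shows "binomial_expectation q d f \<le> binomial_expectation q d g"
  unfolding binomial_expectation_def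
  by (intro sum_mono mult_left_mono) (use assms h_bin_nonneg in auto)

lemma binomial_expectation_abs_le:
  assumes "0 \<le> q" "q \<le> 1"
  shows "\<bar>binomial_expectation q d f\<bar> \<le> binomial_expectation q d (\<lambda>t. \<bar>f t\<bar>)"
proof -
  have "\<bar>binomial_expectation q d f\<bar> \<le> (\<Sum>t\<le>d. \<bar>h_bin q d t * f t\<bar>)"
    unfolding binomial_expectation_def by (rule sum_abs)
  also have "\<dots> = binomial_expectation q d (\<lambda>t. \<bar>f t\<bar>)"
    unfolding binomial_expectation_def using h_bin_nonneg[OF assms] by (simp add: abs_mult)
  finally show ?thesis .
qed

lemma sum_choose_Suc_pascal:
  fixes g :: "nat \<Rightarrow> real"
  shows "(\<Sum>t\<le>Suc d. real (Suc d choose t) * g t) = (\<Sum>t\<le>d. real (d choose t) * (g t + g (Suc t)))"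
proof -
  have "(\<Sum>t\<le>Suc d. real (Suc d choose t) * g t)
      = g 0 + (\<Sum>t\<le>d. real (d choose t) * g (Suc t)) + (\<Sum>t\<le>d. real (d choose Suc t) * g (Suc t))"
    by (subst sum.atMost_Suc_shift) (simp add: sum.distrib algebra_simps)
  also have "(\<Sum>t\<le>d. real (d choose Suc t) * g (Suc t)) = (\<Sum>t\<le>Suc d. real (d choose t) * g t) - g 0"
    by (subst sum.atMost_Suc_shift) simp
  finally show ?thesis by (simp add: sum.distrib algebra_simps)
qed

lemma binomial_expectation_Suc:
  "binomial_expectation q (Suc d) f
     = q * binomial_expectation q d (\<lambda>t. f (Suc t)) + (1 - q) * binomial_expectation q d f"
proof -
  have "binomial_expectation q (Suc d) f
      = (\<Sum>t\<le>Suc d. real (Suc d choose t) * (q ^ t * (1 - q) ^ (Suc d - t) * f t))"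
    unfolding binomial_expectation_def h_bin_def by (simp add: mult_ac)
  also have "\<dots> = (\<Sum>t\<le>d. (1 - q) * (h_bin q d t * f t) + q * (h_bin q d t * f (Suc t)))"
    unfolding sum_choose_Suc_pascal
    by (intro sum.cong refl) (auto simp: h_bin_def Suc_diff_le algebra_simps)
  finally show ?thesis
    unfolding binomial_expectation_def by (simp add: sum.distrib sum_distrib_left)
qed

lemma binomial_expectation_const: "binomial_expectation q d (\<lambda>t. c) = c"
proof (induction d)
  case 0
  show ?case by (simp add: binomial_expectation_def h_bin_def)
qed (simp add: binomial_expectation_Suc algebra_simps)

text \<open>The centred count \<open>t - d q\<close> of \<open>d + 1\<close> trials is the centred count of the first \<open>d\<close>
  trials plus an independent centred Bernoulli variable.\<close>
lemma binomial_expectation_Suc_centred: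
  "binomial_expectation q (Suc d) (\<lambda>t. \<phi> (real t - real (Suc d) * q))
     = binomial_expectation q d (\<lambda>t. q * \<phi> (real t - real d * q + (1 - q))
                                       + (1 - q) * \<phi> (real t - real d * q - q))"
  by (simp add: binomial_expectation_Suc binomial_expectation_linear algebra_simps)

lemma binomial_expectation_centred: "binomial_expectation q d (\<lambda>t. real t - real d * q) = 0"
proof (induction d)
  case (Suc d)
  have "\<And>y. q * (y + (1 - q)) + (1 - q) * (y - q) = y"
    by (simp add: algebra_simps)
  then show ?case
    using binomial_expectation_Suc_centred[of q d "\<lambda>y. y"] Suc by (simp only:)
qed (simp add: binomial_expectation_def h_bin_def)

lemma binomial_expectation_centred_power2:
  "binomial_expectation q d (\<lambda>t. (real t - real d * q)^2) = real d * q * (1 - q)"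
proof (induction d)
  case (Suc d)
  have "\<And>y. q * (y + (1 - q))^2 + (1 - q) * (y - q)^2 = y^2 + q * (1 - q)"
    by (simp add: algebra_simps power2_eq_square)
  then have "binomial_expectation q (Suc d) (\<lambda>t. (real t - real (Suc d) * q)^2)
      = binomial_expectation q d (\<lambda>t. (real t - real d * q)^2 + q * (1 - q))"
    using binomial_expectation_Suc_centred[of q d "\<lambda>y. y^2"] by (simp only:)
  also have "\<dots> = real (Suc d) * q * (1 - q)"
    unfolding binomial_expectation_add binomial_expectation_const Suc by (simp add: algebra_simps)
  finally show ?case .
qed (simp add: binomial_expectation_def h_bin_def)

lemma binomial_expectation_centred_power4:
  "binomial_expectation q d (\<lambda>t. (real t - real d * q)^4)
     = 3 * real d * (real d - 1) * (q * (1 - q))^2 + real d * (q * (1 - q)) * (1 - 3 * (q * (1 - q)))"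
proof (induction d)
  case (Suc d)
  define v where "v = q * (1 - q)"
  have "q * (y + (1 - q))^4 + (1 - q) * (y - q)^4
      = y^4 + 6 * v * y^2 + (4 * q * (1 - q)^3 - 4 * (1 - q) * q^3) * y + (q * (1 - q)^4 + (1 - q) * q^4)"
    for y :: real
    unfolding v_def by algebra
  then have "binomial_expectation q (Suc d) (\<lambda>t. (real t - real (Suc d) * q)^4)
      = binomial_expectation q d (\<lambda>t. (real t - real d * q)^4)
        + 6 * v * binomial_expectation q d (\<lambda>t. (real t - real d * q)^2)
        + (4 * q * (1 - q)^3 - 4 * (1 - q) * q^3) * binomial_expectation q d (\<lambda>t. real t - real d * q)
        + (q * (1 - q)^4 + (1 - q) * q^4)"
    using binomial_expectation_Suc_centred[of q d "\<lambda>y. y^4"]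
    by (simp add: binomial_expectation_linear binomial_expectation_const)
  also have "\<dots> = 3 * real (Suc d) * (real (Suc d) - 1) * v^2 + real (Suc d) * v * (1 - 3 * v)"
    unfolding Suc binomial_expectation_centred_power2 binomial_expectation_centred of_nat_Suc v_def
    by algebra
  finally show ?case unfolding v_def .
qed (simp add: binomial_expectation_def h_bin_def)

section \<open>\<open>I1q\<close> as a binomial expectation\<close>

text \<open>The \<open>t = 0\<close> summand may be added for free: it is \<open>x / Gamma 0 = x / 0 = 0\<close>.\<close>
lemma I1q_eq_binomial_expectation:
  "I1q q s d = q powr (-s) * 2 powr (s / 2)
     * binomial_expectation q d (\<lambda>t. Gamma (real t / 2 + s / 2) / Gamma (real t / 2))"
proof -
  have "{..d} = insert 0 {1..d}" by auto
  then show ?thesis unfolding I1q_def binomial_expectation_def by (simp add: mult.assoc)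
qed

lemma sigma_bar_power2:
  assumes "0 < I1q q s d" "0 < s"
  shows "(sigma_bar q s d)\<^sup>2 = I1q q s d powr (-2 / s)"
  using assms unfolding sigma_bar_def power2_eq_square by (simp add: powr_add[symmetric])

lemma I1q_two:
  assumes "0 < q" shows "I1q q 2 d = real d / q"
proof -
  have Gamma_ratio: "Gamma (x + 1) / Gamma x = x" if "x \<ge> 0" for x :: real
  proof (cases "x = 0")
    case False
    then have "Gamma (x + 1) = x * Gamma x"
      using that by (intro Gamma_plus1) (auto elim!: nonpos_Ints_cases)
    moreover have "Gamma x > 0" using that False by simp
    ultimately show ?thesis by simp
  qed simp
  then have "binomial_expectation q d (\<lambda>t. Gamma (real t / 2 + 2 / 2) / Gamma (real t / 2))
      = binomial_expectation q d (\<lambda>t. (1 / 2) * (real t - real d * q) + real d * q / 2)"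
    using Gamma_ratio[of "real _ / 2"] by (intro binomial_expectation_cong) (simp add: field_simps)
  also have "\<dots> = real d * q / 2"
    unfolding binomial_expectation_add binomial_expectation_cmult binomial_expectation_const
      binomial_expectation_centred by simp
  finally show ?thesis
    using assms by (simp add: I1q_eq_binomial_expectation powr_minus_divide field_simps power2_eq_square)
qed

lemma sigma_bar_two:
  assumes "0 < q" "0 < d" shows "(sigma_bar q 2 d)\<^sup>2 = q / real d"
proof -
  have "(sigma_bar q 2 d)\<^sup>2 = (real d / q) powr (-1/2) * (real d / q) powr (-1/2)"
    unfolding sigma_bar_def I1q_two[OF assms(1)] power2_eq_square by simp
  also have "\<dots> = (real d / q) powr (-1)" by (simp add: powr_add[symmetric])
  also have "\<dots> = q / real d"
    using assms by (simp add: powr_minus_divide)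
  finally show ?thesis .
qed

lemma tendsto_sigma_bar_two:
  assumes "0 < q"
  shows "((\<lambda>d. (real d)\<^sup>2 * ((sigma_bar q 2 d)\<^sup>2 - q / real d)) \<longlongrightarrow> 0) sequentially"
proof -
  have "\<forall>\<^sub>F d in sequentially. 0 = (real d)\<^sup>2 * ((sigma_bar q 2 d)\<^sup>2 - q / real d)"
    using eventually_gt_at_top[of 0] by eventually_elim (simp add: sigma_bar_two assms)
  then show ?thesis by (rule Lim_transform_eventually[OF tendsto_const])
qed

lemma ln_one_plus_ge_quadratic:
  assumes "(u::real) \<ge> 0" shows "u - u^2/2 \<le> ln (1 + u)"
proof -
  let ?p = "\<lambda>u::real. ln (1 + u) - u + u^2/2"
  have "?p 0 \<le> ?p u"
  proof (rule DERIV_nonneg_imp_increasing_open[OF assms])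
    fix x :: real assume x: "0 < x" "x < u"
    have "DERIV ?p x :> (1/(1+x) - 1 + x)"
      using x by (auto intro!: derivative_eq_intros)
    moreover have "1/(1+x) - 1 + x \<ge> 0" using x by (simp add: field_simps)
    ultimately show "\<exists>y. DERIV ?p x :> y \<and> y \<ge> 0" by blast
  qed (intro continuous_intros, auto)
  then show ?thesis by simp
qed

lemma ln_one_plus_le_cubic:
  assumes "(u::real) \<ge> 0" shows "ln (1 + u) \<le> u - u^2/2 + u^3/3"
proof -
  let ?p = "\<lambda>u::real. u - u^2/2 + u^3/3 - ln (1 + u)"
  have "?p 0 \<le> ?p u"
  proof (rule DERIV_nonneg_imp_increasing_open[OF assms])
    fix x :: real assume x: "0 < x" "x < u"
    have "DERIV ?p x :> (1 - x + x^2 - 1/(1+x))"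
      using x by (auto intro!: derivative_eq_intros simp: power2_eq_square)
    moreover have "1 - x + x^2 - 1/(1+x) = x^3/(1+x)"
      using x by (simp add: field_simps power2_eq_square power3_eq_cube)
    ultimately show "\<exists>y. DERIV ?p x :> y \<and> y \<ge> 0" using x by auto
  qed (intro continuous_intros, auto)
  then show ?thesis by simp
qed

lemma exp_le_one_plus_quadratic:
  assumes "\<bar>z::real\<bar> \<le> 1" shows "exp z \<le> 1 + z + z^2"
proof (cases "z \<ge> 0")
  case True
  then show ?thesis using exp_bound[of z] assms by simp
next
  case False
  have "1 - z \<le> exp (-z)" using exp_ge_add_one_self[of "-z"] by simp
  then have "exp z \<le> 1 / (1 - z)" using False by (simp add: exp_minus field_simps)
  also have "1 / (1 - z) \<le> 1 + z + z^2"
  proof -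
    have "(1 + z + z^2) * (1 - z) = 1 + (-z)^3"
      by (simp add: algebra_simps power2_eq_square power3_eq_cube)
    moreover have "0 \<le> (-z)^3" using False by simp
    ultimately have "1 \<le> (1 + z + z^2) * (1 - z)" by linarith
    then show ?thesis using False by (simp add: field_simps)
  qed
  finally show ?thesis .
qed

lemma abs_le_amgm: assumes "(e::real) > 0" shows "\<bar>y\<bar> \<le> e + y^2 / e"
proof (cases "\<bar>y\<bar> \<le> e")
  case False
  then have "\<bar>y\<bar> * e \<le> \<bar>y\<bar> * \<bar>y\<bar>" using assms by (intro mult_left_mono) auto
  then have "\<bar>y\<bar> \<le> y^2 / e" using assms by (simp add: field_simps power2_eq_square)
  then show ?thesis using assms by simp
qed (use assms in \<open>auto intro: add_increasing2\<close>)

lemma abs_power3_le_amgm: assumes "(e::real) > 0" shows "\<bar>y\<bar>^3 \<le> e * y^2 + y^4 / e"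
proof -
  have "\<bar>y\<bar>^3 = y^2 * \<bar>y\<bar>" by (simp add: power2_eq_square power3_eq_cube abs_mult_self_eq)
  also have "\<dots> \<le> y^2 * (e + y^2 / e)" by (intro mult_left_mono abs_le_amgm assms) simp
  finally show ?thesis by (simp add: algebra_simps power2_eq_square power4_eq_xxxx)
qed

lemma inverse_power3_le_diff_inverse_power2:
  assumes y: "y \<ge> (1/2::real)" shows "1 / y^3 \<le> 3 * (1 / y^2 - 1 / (y + 1)^2)"
proof -
  have p: "y > 0" using y by simp
  have "5 * y^2 \<ge> 5 * (1/2) * y" using y p by (simp add: power2_eq_square mult_right_mono)
  then have "5 * y^2 + y - 1 \<ge> 0" using y by linarith
  then have "(y + 1)^2 \<le> 3 * y * (2 * y + 1)" using y by (simp add: power2_eq_square algebra_simps)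
  then have "(y + 1)^2 / (y^3 * (y + 1)^2) \<le> 3 * y * (2 * y + 1) / (y^3 * (y + 1)^2)"
    using p by (intro divide_right_mono) simp_all
  moreover have "(y + 1)^2 / (y^3 * (y + 1)^2) = 1 / y^3" using p by simp
  moreover have "3 * y * (2 * y + 1) / (y^3 * (y + 1)^2) = 3 * (1 / y^2 - 1 / (y + 1)^2)"
  proof -
    have "y + 1 \<noteq> 0" using p by simp
    with p show ?thesis by (simp add: divide_simps) (simp add: algebra_simps power2_eq_square power3_eq_cube)
  qed
  ultimately show ?thesis by simp
qed

lemma powr_minus_half_cancel:
  fixes m :: real
  assumes "0 < m" shows "m powr (-1/2) > 0" "1 / (m powr (-1/2) * m) = m powr (-1/2)"
proof -
  show "m powr (-1/2) > 0" using assms by simp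
  have "m powr (-1/2) * m powr (-1/2) * m = 1"
    using assms by (simp add: powr_add[symmetric] powr_minus_divide)
  then show "1 / (m powr (-1/2) * m) = m powr (-1/2)"
    using assms by (simp add: field_simps)
qed

lemma ln_add_diff_ln:
  assumes "x > 0" "x + b > 0" shows "ln (x + b) - ln x = ln (1 + b / (x::real))"
proof -
  have "1 + b / x = (x + b) / x" using assms by (simp add: field_simps)
  then show ?thesis using assms by (simp add: ln_div)
qed

lemma ln_Gamma_add_one:
  assumes "x > 0" shows "ln (Gamma (x + 1)) = ln x + ln (Gamma (x::real))"
proof -
  have "Gamma (x + 1) = x * Gamma x"
    by (rule Gamma_plus1) (use assms in \<open>auto elim!: nonpos_Ints_cases\<close>)
  moreover have "Gamma x > 0" using assms by simp
  ultimately show ?thesis using assms by (simp add: ln_mult_pos)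
qed

lemma tendsto_one_if_scaled_minus_one:
  fixes x :: "nat \<Rightarrow> real"
  assumes "((\<lambda>n. real n * (x n - 1)) \<longlongrightarrow> L) sequentially"
  shows "(x \<longlongrightarrow> 1) sequentially"
proof -
  have "((\<lambda>n. real n * (x n - 1) * inverse (real n)) \<longlongrightarrow> L * 0) sequentially"
    by (intro tendsto_mult assms tendsto_inverse_0_at_top filterlim_real_sequentially)
  moreover have "\<forall>\<^sub>F n in sequentially. real n * (x n - 1) * inverse (real n) = x n - 1"
    using eventually_gt_at_top[of 0] by eventually_elim simp
  ultimately have "((\<lambda>n. x n - 1) \<longlongrightarrow> 0) sequentially"
    by (simp add: tendsto_cong)
  then show ?thesis by (simp add: LIM_zero_iff)
qed

lemma tendsto_scaled_powr_minus_one: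
  fixes x :: "nat \<Rightarrow> real"
  assumes lim: "((\<lambda>n. real n * (x n - 1)) \<longlongrightarrow> L) sequentially" and "L \<noteq> 0"
  shows "((\<lambda>n. real n * (x n powr p - 1)) \<longlongrightarrow> p * L) sequentially"
proof -
  have "((\<lambda>e::real. (1 + e) powr p) has_field_derivative p) (at 0)"
    by (auto intro!: derivative_eq_intros)
  then have quotient: "((\<lambda>e. ((1 + e) powr p - 1) / e) \<longlongrightarrow> p) (at 0)"
    by (simp add: has_field_derivative_iff)
  have ne: "\<forall>\<^sub>F n in sequentially. real n * (x n - 1) \<noteq> 0"
    by (rule tendsto_imp_eventually_ne[OF lim \<open>L \<noteq> 0\<close>])
  have "filterlim (\<lambda>n. x n - 1) (at 0) sequentially"
    using tendsto_one_if_scaled_minus_one[OF lim] ne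
    unfolding filterlim_at by (auto simp: LIM_zero_iff elim: eventually_mono)
  from filterlim_compose[OF quotient this]
  have "((\<lambda>n. real n * (x n - 1) * ((x n powr p - 1) / (x n - 1))) \<longlongrightarrow> L * p) sequentially"
    by (intro tendsto_mult lim) simp
  moreover have "\<forall>\<^sub>F n in sequentially.
      real n * (x n - 1) * ((x n powr p - 1) / (x n - 1)) = real n * (x n powr p - 1)"
    using ne by eventually_elim simp
  ultimately show ?thesis by (simp add: tendsto_cong mult.commute)
qed

lemma smallo_inverse_square_if_tendsto:
  fixes f :: "nat \<Rightarrow> real"
  assumes "((\<lambda>d. (real d)\<^sup>2 * f d) \<longlongrightarrow> K) sequentially"
  shows "(\<lambda>d. f d - K / (real d)\<^sup>2) \<in> o(\<lambda>d. 1 / (real d)\<^sup>2)"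
proof (rule smalloI_tendsto)
  have "((\<lambda>d. (real d)\<^sup>2 * f d - K) \<longlongrightarrow> 0) sequentially"
    using assms by (simp add: LIM_zero_iff)
  moreover have "\<forall>\<^sub>F d in sequentially. (real d)\<^sup>2 * f d - K = (f d - K / (real d)\<^sup>2) / (1 / (real d)\<^sup>2)"
    using eventually_gt_at_top[of 0] by eventually_elim (simp add: field_simps)
  ultimately show "((\<lambda>d. (f d - K / (real d)\<^sup>2) / (1 / (real d)\<^sup>2)) \<longlongrightarrow> 0) sequentially"
    by (simp add: tendsto_cong)
  show "\<forall>\<^sub>F d in sequentially. 1 / (real d)\<^sup>2 \<noteq> 0"
    using eventually_gt_at_top[of 0] by eventually_elim simp
qed

section \<open>The ratio \<open>Gamma (y + a) / Gamma y\<close> and powers near \<open>1\<close>\<close>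

locale fractional_exponent =
  fixes a :: real
  assumes a_pos: "0 < a" and a_less_1: "a < 1"
begin

definition c :: real where "c = a * (1 - a) / 2"

lemma c_pos: "0 < c" and c_le: "c \<le> 1/8"
proof -
  show "0 < c" using a_pos a_less_1 by (simp add: c_def)
  have "0 \<le> (a - 1/2)^2" by simp
  then show "c \<le> 1/8" by (simp add: c_def power2_eq_square algebra_simps)
qed

text \<open>Wendel's inequalities: log-convexity of \<open>Gamma\<close> on \<open>x \<le> x + a \<le> x + 1\<close> and on
  \<open>x + a \<le> x + 1 \<le> x + a + 1\<close>.\<close>
lemma ln_Gamma_add_le:
  assumes x: "x > 0" shows "ln (Gamma (x + a)) \<le> ln (Gamma x) + a * ln x"
proof -
  have "(ln \<circ> Gamma) ((1 - a) *\<^sub>R x + a *\<^sub>R (x + 1))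
      \<le> (1 - a) * (ln \<circ> Gamma) x + a * (ln \<circ> Gamma) (x + 1)"
    by (rule convex_onD[OF log_convex_Gamma_real]) (use x a_pos a_less_1 in auto)
  moreover have "(1 - a) *\<^sub>R x + a *\<^sub>R (x + 1) = x + a" by (simp add: algebra_simps)
  ultimately show ?thesis using ln_Gamma_add_one[OF x] by (simp add: algebra_simps)
qed

lemma ln_Gamma_add_ge:
  assumes x: "x > 0" shows "ln (Gamma x) + ln x - (1 - a) * ln (x + a) \<le> ln (Gamma (x + a))"
proof -
  have "(ln \<circ> Gamma) ((1 - (1 - a)) *\<^sub>R (x + a) + (1 - a) *\<^sub>R (x + a + 1))
      \<le> (1 - (1 - a)) * (ln \<circ> Gamma) (x + a) + (1 - a) * (ln \<circ> Gamma) (x + a + 1)"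
    by (rule convex_onD[OF log_convex_Gamma_real]) (use x a_pos a_less_1 in auto)
  moreover have "(1 - (1 - a)) *\<^sub>R (x + a) + (1 - a) *\<^sub>R (x + a + 1) = x + 1"
    by (simp add: algebra_simps)
  moreover have "ln (Gamma (x + a + 1)) = ln (x + a) + ln (Gamma (x + a))"
    using ln_Gamma_add_one[of "x + a"] x a_pos by simp
  ultimately show ?thesis using ln_Gamma_add_one[OF x] by (simp add: algebra_simps)
qed

definition gamma_remainder :: "real \<Rightarrow> real" where
  "gamma_remainder y = ln (Gamma (y + a)) - ln (Gamma y) - a * ln y + c / y"

lemma gamma_remainder_le_inverse:
  assumes z: "z > 0" shows "\<bar>gamma_remainder z\<bar> \<le> 1 / z"
proof -
  have "ln (z + a) - ln z = ln (1 + a / z)"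
    using z a_pos by (simp add: ln_add_diff_ln)
  also have "\<dots> \<le> a / z" using z a_pos by (intro ln_add_one_self_le_self) simp
  finally have "(1 - a) * (ln (z + a) - ln z) \<le> (1 - a) * (a / z)"
    using a_less_1 by (intro mult_left_mono) auto
  also have "(1 - a) * (a / z) = 2 * c / z" by (simp add: c_def)
  finally have "- (2 * c / z) \<le> ln (Gamma (z + a)) - ln (Gamma z) - a * ln z"
    using ln_Gamma_add_ge[OF z] by (simp add: algebra_simps)
  moreover have "c / z \<le> (1/8) / z" using c_le z by (intro divide_right_mono) auto
  moreover have "0 \<le> c / z" using c_pos z by simp
  ultimately show ?thesis
    using ln_Gamma_add_le[OF z] unfolding gamma_remainder_def by (simp add: abs_le_iff field_simps)
qed

lemma gamma_remainder_step_eq: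
  assumes y: "y > 0"
  shows "gamma_remainder y - gamma_remainder (y + 1)
    = a * ln (1 + 1 / y) - ln (1 + a * (1 / y)) + c * (1 / y)^2 - c * (1 / y)^3 / (1 + 1 / y)"
proof -
  have "ln (Gamma (y + 1 + a)) = ln (y + a) + ln (Gamma (y + a))"
    using ln_Gamma_add_one[of "y + a"] y a_pos by (simp add: add_ac)
  moreover have "ln (y + 1) - ln y = ln (1 + 1 / y)" "ln (y + a) - ln y = ln (1 + a * (1 / y))"
    using y a_pos ln_add_diff_ln[of y 1] ln_add_diff_ln[of y a] by simp_all
  moreover have "c / y - c / (y + 1) = c * (1 / y)^2 - c * (1 / y)^3 / (1 + 1 / y)"
    using y by (simp add: divide_simps) algebra
  ultimately show ?thesis
    using ln_Gamma_add_one[OF y] unfolding gamma_remainder_def by (simp add: algebra_simps)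
qed

lemma gamma_remainder_step:
  assumes y: "y \<ge> 1/2"
  shows "\<bar>gamma_remainder y - gamma_remainder (y + 1)\<bar> \<le> 3 * (1 / y^2 - 1 / (y + 1)^2)"
proof -
  define u where "u = 1 / y"
  have u: "u > 0" using y by (simp add: u_def)
  have eq: "gamma_remainder y - gamma_remainder (y + 1)
      = a * ln (1 + u) - ln (1 + a * u) + c * u^2 - c * u^3 / (1 + u)"
    unfolding u_def using y by (intro gamma_remainder_step_eq) simp
  have L1: "a * (u - u^2/2) \<le> a * ln (1 + u)"
    using ln_one_plus_ge_quadratic[of u] u a_pos by (intro mult_left_mono) auto
  have U1: "a * ln (1 + u) \<le> a * (u - u^2/2 + u^3/3)"
    using ln_one_plus_le_cubic[of u] u a_pos by (intro mult_left_mono) auto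
  have L2: "a*u - (a*u)^2/2 \<le> ln (1 + a * u)"
    using ln_one_plus_ge_quadratic[of "a*u"] u a_pos by simp
  have U2: "ln (1 + a * u) \<le> a*u - (a*u)^2/2 + (a*u)^3/3"
    using ln_one_plus_le_cubic[of "a*u"] u a_pos by simp
  have t: "0 \<le> c * u^3 / (1 + u)" "c * u^3 / (1 + u) \<le> c * u^3"
    using u c_pos by (simp_all add: divide_le_eq)
  have "a * (u - u^2/2 + u^3/3) - (a*u - (a*u)^2/2) + c * u^2 = a * u^3 / 3"
    unfolding c_def by (simp add: field_simps power2_eq_square power3_eq_cube)
  moreover have "a * (u - u^2/2) - (a*u - (a*u)^2/2 + (a*u)^3/3) + c * u^2 - c * u^3
      = - (a^3/3 + c) * u^3"
    unfolding c_def by (simp add: field_simps power2_eq_square power3_eq_cube)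
  moreover have "a * u^3 / 3 \<le> u^3" "(a^3/3 + c) * u^3 \<le> u^3"
    using u a_pos a_less_1 c_le power_le_one[of a 3] by (auto intro: mult_left_le_one_le)
  ultimately have "\<bar>gamma_remainder y - gamma_remainder (y + 1)\<bar> \<le> u^3"
    unfolding eq abs_le_iff using L1 U1 L2 U2 t by linarith
  also have "u^3 = 1 / y^3" by (simp add: u_def power_one_over)
  finally show ?thesis using inverse_power3_le_diff_inverse_power2[OF y] by linarith
qed

lemma gamma_remainder_bound:
  assumes y: "y \<ge> 1/2" shows "\<bar>gamma_remainder y\<bar> \<le> 3 / y^2"
proof (rule field_le_epsilon)
  have tele: "\<bar>gamma_remainder y - gamma_remainder (y + real N)\<bar> \<le> 3 * (1 / y^2 - 1 / (y + real N)^2)"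
    for N
  proof (induction N)
    case (Suc N)
    then show ?case
      using gamma_remainder_step[of "y + real N"] y by (simp add: add_ac)
  qed simp
  fix e :: real assume e: "0 < e"
  define N where "N = nat \<lceil>1 / e\<rceil>"
  have pos: "y + real N > 0" using y by simp
  have "1 / e \<le> y + real N" using y unfolding N_def by linarith
  then have "1 / (y + real N) \<le> e" using e pos by (simp add: field_simps)
  moreover have "3 * (1 / y^2 - 1 / (y + real N)^2) \<le> 3 / y^2" by simp
  ultimately show "\<bar>gamma_remainder y\<bar> \<le> 3 / y^2 + e"
    using gamma_remainder_le_inverse[OF pos] tele[of N] unfolding abs_le_iff by linarith
qed

lemma exp_gamma_remainder_expansion:
  assumes y: "y \<ge> 1/2"
  shows "\<bar>exp (gamma_remainder y - c / y) - 1 + c / y\<bar> \<le> 20 / y^2"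
proof -
  have p: "y > 0" using y by simp
  have R: "\<bar>gamma_remainder y\<bar> \<le> 3 / y^2" by (rule gamma_remainder_bound[OF y])
  have cy: "0 \<le> c / y" "c / y \<le> (1/8) / y"
    using c_pos c_le p by (simp, intro divide_right_mono, simp_all)
  show ?thesis
  proof (cases "y \<ge> 4")
    case True
    define z where "z = gamma_remainder y - c / y"
    have "3 / y^2 = (3 / y) / y" by (simp add: power2_eq_square)
    also have "\<dots> \<le> (3/4) / y" using True p by (intro divide_right_mono) (auto simp: field_simps)
    finally have z: "\<bar>z\<bar> \<le> (7/8) / y" using R cy unfolding z_def by (simp add: abs_le_iff)
    moreover have "(7/8) / y \<le> 1" using True by simp
    ultimately have z1: "\<bar>z\<bar> \<le> 1" by linarith
    have "z^2 \<le> ((7/8) / y)^2" using z by (metis abs_ge_zero power2_abs power_mono)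
    also have "\<dots> = (49/64) / y^2" by (simp add: power_divide)
    also have "\<dots> \<le> 1 / y^2" by (rule divide_right_mono) auto
    finally have "z^2 \<le> 1 / y^2" .
    moreover have "1 + z \<le> exp z" "exp z \<le> 1 + z + z^2"
      using exp_le_one_plus_quadratic[OF z1] by simp_all
    moreover have "3 / y^2 = 3 * (1 / y^2)" "20 / y^2 = 20 * (1 / y^2)" by simp_all
    ultimately show ?thesis using R unfolding z_def abs_le_iff by linarith
  next
    case False
    have "exp (gamma_remainder y - c / y) \<le> 1"
      using ln_Gamma_add_le[OF p] unfolding gamma_remainder_def by simp
    moreover have "y^2 \<le> 4^2" using False p by (intro power_mono) auto
    then have "5/4 \<le> 20 / y^2" using p by (simp add: field_simps)
    moreover have "(1/8) / y \<le> 1/4" using y by (simp add: field_simps)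
    ultimately show ?thesis
      using cy exp_gt_zero[of "gamma_remainder y - c / y"] unfolding abs_le_iff by linarith
  qed
qed

lemma Gamma_ratio_expansion:
  assumes y: "y \<ge> 1/2"
  shows "\<bar>Gamma (y + a) / Gamma y - y powr a + c * y powr (a - 1)\<bar> \<le> 20 * y powr (a - 2)"
proof -
  have p: "y > 0" using y by simp
  have "Gamma y > 0" "Gamma (y + a) > 0" using p a_pos by auto
  then have "Gamma (y + a) / Gamma y = exp (gamma_remainder y - c / y) * y powr a"
    using p by (simp add: gamma_remainder_def powr_def exp_add[symmetric] exp_diff)
  moreover have "y powr (a - 1) = y powr a / y" "y powr (a - 2) = y powr a / y^2"
    using p by (simp_all add: powr_diff powr_realpow)
  ultimately have "Gamma (y + a) / Gamma y - y powr a + c * y powr (a - 1)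
      = y powr a * (exp (gamma_remainder y - c / y) - 1 + c / y)"
    and "y powr a * (20 / y^2) = 20 * y powr (a - 2)"
    by (simp_all add: algebra_simps)
  then have "\<bar>Gamma (y + a) / Gamma y - y powr a + c * y powr (a - 1)\<bar>
      = y powr a * \<bar>exp (gamma_remainder y - c / y) - 1 + c / y\<bar>"
    by (simp add: abs_mult)
  also have "\<dots> \<le> y powr a * (20 / y^2)"
    by (intro mult_left_mono exp_gamma_remainder_expansion[OF y]) simp
  also have "\<dots> = 20 * y powr (a - 2)"
    by fact
  finally show ?thesis .
qed

lemma powr_taylor2_lagrange:
  assumes x: "x \<ge> 1/2"
  obtains t where "t \<ge> 1/2"
    and "x powr a = 1 + a * (x - 1) - c * (x - 1)^2 + a * (a - 1) * (a - 2) / 6 * t powr (a - 3) * (x - 1)^3"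
proof (cases "x = 1")
  case False
  define D where "D m t = (\<Prod>i<m. (a - real i)) * t powr (a - real m)" for m :: nat and t :: real
  have "\<exists>t. (if x < 1 then x < t \<and> t < 1 else 1 < t \<and> t < x) \<and>
      x powr a = (\<Sum>m<3. (D m 1 / fact m) * (x - 1)^m) + (D 3 t / fact 3) * (x - 1)^3"
  proof (rule Taylor[of 3 D "\<lambda>x. x powr a" "1/2" "x + 1" 1 x])
    show "\<forall>(m::nat) t. m < 3 \<and> 1/2 \<le> t \<and> t \<le> x + 1 \<longrightarrow> DERIV (D m) t :> D (Suc m) t"
    proof (intro allI impI)
      fix m :: nat and t :: real
      assume "m < 3 \<and> 1/2 \<le> t \<and> t \<le> x + 1"
      then have "DERIV (D m) t :> (\<Prod>i<m. (a - real i)) * ((a - real m) * t powr (a - real m - 1))"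
        unfolding D_def by (auto intro!: derivative_eq_intros)
      then show "DERIV (D m) t :> D (Suc m) t" by (simp add: D_def algebra_simps)
    qed
  qed (use x False in \<open>auto simp: D_def\<close>)
  then obtain t where t: "if x < 1 then x < t \<and> t < 1 else 1 < t \<and> t < x"
    and "x powr a = (\<Sum>m<3. (D m 1 / fact m) * (x - 1)^m) + (D 3 t / fact 3) * (x - 1)^3"
    by blast
  moreover have "t \<ge> 1/2" using t x by (auto split: if_splits)
  ultimately show ?thesis
    by (intro that[of t]) (simp_all add: D_def c_def eval_nat_numeral fact_numeral field_simps)
qed (use that[of 1] in simp)

lemma powr_taylor2_remainder:
  assumes x: "x \<ge> 0"
  shows "\<bar>x powr a - 1 - a * (x - 1) + c * (x - 1)^2\<bar> \<le> 24 * \<bar>x - 1\<bar>^3"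
proof (cases "x < 1/2")
  case True
  have "\<bar>x - 1\<bar>^2 \<le> 1^2" using x True by (intro power_mono) auto
  then have "c * (x - 1)^2 \<le> 1" using c_le c_pos by (intro mult_le_one) auto
  moreover have "x powr a \<le> 1" using x True a_pos by (intro powr_le1) auto
  moreover have "\<bar>a * (x - 1)\<bar> \<le> 1"
    using a_pos a_less_1 x True by (simp add: abs_mult) (intro mult_le_one, auto)
  moreover have "(1/2::real)^3 \<le> \<bar>x - 1\<bar>^3" using True by (intro power_mono) auto
  then have "3 \<le> 24 * \<bar>x - 1\<bar>^3" by (simp add: power_divide)
  moreover have "0 \<le> c * (x - 1)^2" "0 \<le> x powr a" using c_pos by simp_all
  ultimately show ?thesis unfolding abs_le_iff by linarith
next
  case False
  then obtain t where t: "t \<ge> 1/2" and eq: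
    "x powr a = 1 + a * (x - 1) - c * (x - 1)^2 + a * (a - 1) * (a - 2) / 6 * t powr (a - 3) * (x - 1)^3"
    using powr_taylor2_lagrange by (metis not_less)
  have "\<bar>a * (a - 1) * (a - 2)\<bar> = a * (1 - a) * (2 - a)"
    using a_pos a_less_1 by (simp add: abs_mult)
  also have "\<dots> \<le> 1 * 1 * 2" using a_pos a_less_1 by (intro mult_mono) auto
  finally have "\<bar>a * (a - 1) * (a - 2) / 6\<bar> \<le> 1/3" by simp
  moreover have "t powr (a - 3) \<le> (1/2) powr (a - 3)"
    using t a_less_1 by (intro powr_mono2') auto
  moreover have "(1/2::real) powr (a - 3) = 2 powr (3 - a)"
    by (simp add: powr_divide powr_minus_divide[symmetric] powr_minus)
  moreover have "2 powr (3 - a) \<le> 2 powr 3" using a_pos by (intro powr_mono) auto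
  ultimately have "\<bar>a * (a - 1) * (a - 2) / 6 * t powr (a - 3)\<bar> \<le> 1/3 * 8"
    unfolding abs_mult[of "a * (a - 1) * (a - 2) / 6"] by (intro mult_mono) auto
  then have "\<bar>a * (a - 1) * (a - 2) / 6 * t powr (a - 3) * (x - 1)^3\<bar> \<le> 24 * \<bar>x - 1\<bar>^3"
    unfolding abs_mult[of _ "(x - 1)^3"] power_abs by (intro mult_right_mono) auto
  then show ?thesis using eq by simp
qed

text \<open>Here and below \<open>t\<close> is a natural number, so \<open>t / m\<close> is \<open>0\<close> (where \<open>0 powr _ = 0\<close>) or at
  least \<open>1 / m\<close>; this is what keeps the negative powers under control.\<close>
lemma powr_pred_le_at_nat:
  assumes m: "m \<ge> (1::real)" shows "(real t / m) powr (a - 1) \<le> m powr (1 - a)"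
proof (cases "t = 0")
  case False
  then have "real t powr (a - 1) \<le> 1" using powr_mono2'[of "a - 1" 1 "real t"] a_less_1 by simp
  then have "real t powr (a - 1) / m powr (a - 1) \<le> 1 / m powr (a - 1)"
    using m by (intro divide_right_mono) auto
  then show ?thesis by (simp add: powr_divide powr_minus_divide[symmetric])
qed simp

lemma powr_pred_deviation_bound:
  assumes m: "m \<ge> (1::real)"
  shows "\<bar>(real t / m) powr (a - 1) - 1\<bar>
    \<le> 2 * \<bar>real t / m - 1\<bar> + 4 * (m powr (1 - a) + 1) * (real t / m - 1)^2"
proof -
  define x where "x = real t / m"
  define M where "M = m powr (1 - a)"
  have M: "M > 0" using m by (simp add: M_def)
  have sq: "0 \<le> 4 * (M + 1) * (x - 1)^2" using M by simp
  consider "x \<ge> 1" | "1/2 \<le> x" "x < 1" | "x < 1/2" by linarith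
  then have "\<bar>x powr (a - 1) - 1\<bar> \<le> 2 * \<bar>x - 1\<bar> + 4 * (M + 1) * (x - 1)^2"
  proof cases
    case 1
    have "x powr (a - 1) \<le> 1" using powr_mono2'[of "a - 1" 1 x] 1 a_less_1 by simp
    moreover have "x powr (-1) \<le> x powr (a - 1)" using 1 a_pos by (intro powr_mono) auto
    moreover have "0 \<le> (x - 1)^2" by simp
    then have "1 - 1 / x \<le> x - 1" using 1 by (simp add: field_simps power2_eq_square algebra_simps)
    ultimately show ?thesis using 1 sq by (simp add: abs_le_iff powr_minus_divide)
  next
    case 2
    have "1 \<le> x powr (a - 1)" using powr_mono2'[of "a - 1" x 1] 2 a_less_1 by simp
    moreover have "x powr (a - 1) \<le> x powr (-1)" using 2 a_pos by (intro powr_mono') auto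
    moreover have "1 * (1 - x) \<le> (2 * x) * (1 - x)" using 2 by (intro mult_right_mono) auto
    then have "1 / x - 1 \<le> 2 * (1 - x)" using 2 by (simp add: field_simps)
    ultimately show ?thesis using 2 sq by (simp add: abs_le_iff powr_minus_divide)
  next
    case 3
    have "(1/2)^2 \<le> \<bar>x - 1\<bar>^2" using 3 by (intro power_mono) auto
    then have "(M + 1) * 1 \<le> (M + 1) * (4 * (x - 1)^2)"
      using M by (intro mult_left_mono) (auto simp: power_divide)
    then have "M + 1 \<le> 4 * (M + 1) * (x - 1)^2" by (simp add: algebra_simps)
    moreover have "x powr (a - 1) \<le> M" unfolding x_def M_def by (rule powr_pred_le_at_nat[OF m])
    ultimately have "\<bar>x powr (a - 1) - 1\<bar> \<le> 4 * (M + 1) * (x - 1)^2"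
      using M powr_ge_zero[of x "a - 1"] unfolding abs_le_iff by linarith
    then show ?thesis by (rule order_trans) simp
  qed
  then show ?thesis by (simp add: x_def M_def)
qed

lemma powr_sub_two_deviation_bound:
  assumes m: "m \<ge> (1::real)"
  shows "m powr (1 - a) * real t powr (a - 2) \<le> 4 / m + 4 * m powr (1 - a) * (real t / m - 1)^2"
proof (cases "t = 0")
  case False
  define x where "x = real t / m"
  have t: "real t \<ge> 1" using False by simp
  show ?thesis
  proof (cases "x \<ge> 1/2")
    case True
    have "x powr (a - 2) \<le> (1/2) powr (a - 2)" using True a_less_1 by (intro powr_mono2') auto
    also have "(1/2::real) powr (a - 2) = 2 powr (2 - a)"
      by (simp add: powr_divide powr_minus_divide[symmetric])
    also have "\<dots> \<le> 2 powr 2" using a_pos by (intro powr_mono) auto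
    finally have "x powr (a - 2) * (1 / m) \<le> 4 * (1 / m)" using m by (intro mult_right_mono) auto
    moreover have "m powr (1 - a) * real t powr (a - 2) = x powr (a - 2) * (1 / m)"
    proof -
      have "real t powr (a - 2) = x powr (a - 2) * m powr (a - 2)"
        using m by (simp add: x_def powr_divide)
      then have "m powr (1 - a) * real t powr (a - 2) = x powr (a - 2) * (m powr (1 - a) * m powr (a - 2))"
        by (simp only: ac_simps)
      also have "m powr (1 - a) * m powr (a - 2) = 1 / m"
        using m by (simp add: powr_add[symmetric] powr_minus_divide[symmetric])
      finally show ?thesis .
    qed
    moreover have "0 \<le> 4 * m powr (1 - a) * (real t / m - 1)^2" by simp
    ultimately show ?thesis by linarith
  next
    case False
    have "(1/2)^2 \<le> \<bar>x - 1\<bar>^2" using False by (intro power_mono) auto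
    then have "m powr (1 - a) * 1 \<le> m powr (1 - a) * (4 * (x - 1)^2)"
      by (intro mult_left_mono) (auto simp: power_divide)
    then have "m powr (1 - a) * 1 \<le> 4 * m powr (1 - a) * (real t / m - 1)^2"
      by (simp add: x_def mult_ac)
    moreover have "m powr (1 - a) * real t powr (a - 2) \<le> m powr (1 - a) * 1"
      using powr_mono2'[of "a - 2" 1 "real t"] t a_less_1 by (intro mult_left_mono) auto
    moreover have "0 \<le> 4 / m" using m by simp
    ultimately show ?thesis by linarith
  qed
qed (use m in simp)

end

locale gamma_binomial = fractional_exponent +
  fixes q :: real
  assumes q_pos: "0 < q" and q_le_1: "q \<le> 1"
begin

definition mean :: "nat \<Rightarrow> real" where "mean d = real d * q"

lemma mean_pos_iff: "0 < mean d \<longleftrightarrow> 0 < d"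
  using q_pos by (simp add: mean_def zero_less_mult_iff)

lemma binomial_expectation_normalized_power:
  assumes "0 < d"
  shows "binomial_expectation q d (\<lambda>t. (real t / mean d - 1)^k)
    = binomial_expectation q d (\<lambda>t. (real t - real d * q)^k) / mean d ^ k"
proof -
  have "mean d \<noteq> 0" using assms by (simp add: mean_pos_iff[symmetric])
  then have "\<And>t. (real t / mean d - 1)^k = (1 / mean d ^ k) * (real t - real d * q)^k"
    by (simp add: mean_def field_simps power_divide)
  then show ?thesis by (simp only: binomial_expectation_cmult) simp
qed

lemma binomial_expectation_normalized_power2:
  "0 < d \<Longrightarrow> binomial_expectation q d (\<lambda>t. (real t / mean d - 1)^2) = (1 - q) / mean d"
  unfolding binomial_expectation_normalized_power binomial_expectation_centred_power2
  using q_pos by (simp add: mean_def power2_eq_square)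

lemma binomial_expectation_normalized_power4_le:
  assumes m: "mean d \<ge> 1"
  shows "binomial_expectation q d (\<lambda>t. (real t / mean d - 1)^4) \<le> 4 / mean d ^ 2"
proof -
  define v where "v = q * (1 - q)"
  have v: "0 \<le> v" "v \<le> q" using q_pos q_le_1 by (auto simp: v_def mult_le_cancel_left1)
  have d: "real d \<ge> 1" "0 < d" using m mean_pos_iff[of d] by (auto simp: mean_def)
  have "real d * (real d - 1) * v^2 \<le> real d * real d * q^2"
    using d v by (intro mult_mono power_mono) auto
  moreover have "real d * v * (1 - 3 * v) \<le> real d * q"
    using d v mult_left_mono[of "1 - 3 * v" 1 "real d * v"] by (simp add: mult_left_mono)
  moreover have "mean d \<le> mean d ^ 2" using m by (simp add: power2_eq_square)
  ultimately have "3 * real d * (real d - 1) * v^2 + real d * v * (1 - 3 * v) \<le> 4 * mean d ^ 2"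
    unfolding mean_def by (simp add: power2_eq_square algebra_simps)
  then have "(3 * real d * (real d - 1) * v^2 + real d * v * (1 - 3 * v)) / mean d ^ 4
      \<le> 4 * mean d ^ 2 / mean d ^ 4"
    using m by (intro divide_right_mono) auto
  also have "\<dots> = 4 / mean d ^ 2" using m by (simp add: field_simps power2_eq_square power4_eq_xxxx)
  finally show ?thesis
    using d by (simp add: binomial_expectation_normalized_power binomial_expectation_centred_power4 v_def)
qed

lemma binomial_expectation_abs_le_moments:
  assumes m: "mean d \<ge> 1" and "0 \<le> \<beta>" "0 \<le> \<gamma>"
    and f: "\<And>t. \<bar>f t\<bar> \<le> \<alpha> + \<beta> * (real t / mean d - 1)^2 + \<gamma> * (real t / mean d - 1)^4"
  shows "\<bar>binomial_expectation q d f\<bar> \<le> \<alpha> + \<beta> / mean d + 4 * \<gamma> / mean d ^ 2"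
proof -
  have d: "0 < d" using m mean_pos_iff[of d] by simp
  have "\<bar>binomial_expectation q d f\<bar> \<le> binomial_expectation q d (\<lambda>t. \<bar>f t\<bar>)"
    using q_pos q_le_1 by (intro binomial_expectation_abs_le) auto
  also have "\<dots> \<le> binomial_expectation q d
      (\<lambda>t. \<alpha> + \<beta> * (real t / mean d - 1)^2 + \<gamma> * (real t / mean d - 1)^4)"
    using q_pos q_le_1 f by (intro binomial_expectation_mono) auto
  also have "\<dots> = \<alpha> + \<beta> * ((1 - q) / mean d)
      + \<gamma> * binomial_expectation q d (\<lambda>t. (real t / mean d - 1)^4)"
    by (simp add: binomial_expectation_linear binomial_expectation_const
        binomial_expectation_normalized_power2[OF d])
  also have "\<dots> \<le> \<alpha> + \<beta> * (1 / mean d) + \<gamma> * (4 / mean d ^ 2)"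
    using assms q_pos binomial_expectation_normalized_power4_le[OF m]
    by (intro add_mono mult_left_mono order.refl divide_right_mono) auto
  finally show ?thesis by (simp add: mult.commute)
qed

lemma scaled_expectation_powr_expansion:
  assumes m: "mean d \<ge> 1"
  shows "\<bar>mean d * (binomial_expectation q d (\<lambda>t. (real t / mean d) powr a) - 1) + c * (1 - q)\<bar>
    \<le> 120 * mean d powr (-1/2)"
proof -
  define m where "m = mean d"
  have m0: "m > 0" "m \<ge> 1" using m by (auto simp: m_def)
  have d: "0 < d" using m mean_pos_iff[of d] by simp
  define Y where "Y t = real t / m - 1" for t
  define F where "F t = (real t / m) powr a - 1 - a * Y t + c * (Y t)^2" for t
  define e where "e = m powr (-1/2)"
  have e: "e > 0" "1 / (e * m) = e" using powr_minus_half_cancel[OF m0(1)] by (simp_all add: e_def)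
  have "binomial_expectation q d F
      = binomial_expectation q d (\<lambda>t. (real t / m) powr a) - 1 + c * ((1 - q) / m)"
    using binomial_expectation_normalized_power[OF d, of 1] binomial_expectation_centred[of q d]
      binomial_expectation_normalized_power2[OF d]
    unfolding F_def Y_def m_def by (simp add: binomial_expectation_linear binomial_expectation_const)
  then have eq: "m * (binomial_expectation q d (\<lambda>t. (real t / m) powr a) - 1) + c * (1 - q)
      = m * binomial_expectation q d F"
    using m0 by (simp add: field_simps)
  have "\<bar>F t\<bar> \<le> 0 + 24 * e * (Y t)^2 + 24 / e * (Y t)^4" for t
  proof -
    have "\<bar>F t\<bar> \<le> 24 * \<bar>Y t\<bar>^3"
      unfolding F_def Y_def using powr_taylor2_remainder[of "real t / m"] m0 by simp
    then show ?thesis using abs_power3_le_amgm[OF e(1), of "Y t"] by simp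
  qed
  then have "\<bar>binomial_expectation q d F\<bar> \<le> 0 + 24 * e / m + 4 * (24 / e) / m^2"
    using e unfolding m_def Y_def by (intro binomial_expectation_abs_le_moments[OF m]) auto
  then have "\<bar>m * binomial_expectation q d F\<bar> \<le> m * (24 * e / m + 96 / e / m^2)"
    using m0 by (simp add: abs_mult)
  also have "\<dots> = 24 * e + 96 * (1 / (e * m))"
    using e m0 by (simp add: field_simps power2_eq_square)
  finally show ?thesis
    using eq e by (simp add: e_def m_def)
qed

lemma expectation_powr_pred_expansion:
  assumes m: "mean d \<ge> 1"
  shows "\<bar>binomial_expectation q d (\<lambda>t. (real t / mean d) powr (a - 1)) - 1\<bar>
    \<le> 4 * mean d powr (-1/2) + 4 * mean d powr (-a) + 4 * mean d powr (-1)"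
proof -
  define m where "m = mean d"
  have m0: "m > 0" "m \<ge> 1" using m by (auto simp: m_def)
  define M where "M = m powr (1 - a)"
  have M: "M > 0" using m0 by (simp add: M_def)
  define e where "e = m powr (-1/2)"
  have e: "e > 0" "1 / (e * m) = e" using powr_minus_half_cancel[OF m0(1)] by (simp_all add: e_def)
  have "\<bar>(real t / m) powr (a - 1) - 1\<bar> \<le> 2 * e + (2 / e + 4 * (M + 1)) * (real t / m - 1)^2 + 0 * (real t / m - 1)^4"
    for t
  proof -
    have "\<bar>(real t / m) powr (a - 1) - 1\<bar> \<le> 2 * \<bar>real t / m - 1\<bar> + 4 * (M + 1) * (real t / m - 1)^2"
      using powr_pred_deviation_bound[OF m0(2), of t] by (simp add: M_def)
    then show ?thesis using abs_le_amgm[OF e(1), of "real t / m - 1"] by (simp add: algebra_simps)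
  qed
  then have "\<bar>binomial_expectation q d (\<lambda>t. (real t / m) powr (a - 1) - 1)\<bar>
      \<le> 2 * e + (2 / e + 4 * (M + 1)) / m + 4 * 0 / m^2"
    using e M unfolding m_def by (intro binomial_expectation_abs_le_moments[OF m]) auto
  moreover have "2 * e + (2 / e + 4 * (M + 1)) / m + 4 * 0 / m^2
      = 4 * m powr (-1/2) + 4 * m powr (-a) + 4 * m powr (-1)"
  proof -
    have "M / m = m powr (-a)" "1 / m = m powr (-1)"
      using m0 by (simp_all add: M_def powr_diff powr_minus_divide)
    moreover have "2 * e + (2 / e + 4 * (M + 1)) / m + 4 * 0 / m^2
        = 2 * e + 2 * (1 / (e * m)) + 4 * (M / m) + 4 * (1 / m)"
      using m0 e by (simp add: field_simps)
    ultimately show ?thesis using e by (simp add: e_def)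
  qed
  ultimately show ?thesis
    by (simp add: binomial_expectation_diff binomial_expectation_const m_def)
qed

definition gamma_error :: "nat \<Rightarrow> real" where
  "gamma_error t = 2 powr a * (Gamma (real t / 2 + a) / Gamma (real t / 2))
     - real t powr a + 2 * c * real t powr (a - 1)"

lemma gamma_error_bound: "\<bar>gamma_error t\<bar> \<le> 80 * real t powr (a - 2)"
proof (cases "t = 0")
  case False
  define y where "y = real t / 2"
  have y: "y \<ge> 1/2" using False by (simp add: y_def)
  have "2 powr a * y powr a = real t powr a"
    and "2 powr a * y powr (a - 1) = 2 * real t powr (a - 1)"
    and "2 powr a * y powr (a - 2) = 4 * real t powr (a - 2)"
    by (simp_all add: y_def powr_divide powr_diff)
  then have "gamma_error t = 2 powr a * (Gamma (y + a) / Gamma y - y powr a + c * y powr (a - 1))"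
    unfolding gamma_error_def y_def[symmetric] by (simp add: algebra_simps)
  then have "\<bar>gamma_error t\<bar> = 2 powr a * \<bar>Gamma (y + a) / Gamma y - y powr a + c * y powr (a - 1)\<bar>"
    by (simp add: abs_mult)
  also have "\<dots> \<le> 2 powr a * (20 * y powr (a - 2))"
    by (intro mult_left_mono Gamma_ratio_expansion[OF y]) simp
  also have "\<dots> = 80 * real t powr (a - 2)"
    using \<open>2 powr a * y powr (a - 2) = 4 * real t powr (a - 2)\<close> by simp
  finally show ?thesis .
qed (simp add: gamma_error_def)

lemma scaled_expectation_gamma_error:
  assumes m: "mean d \<ge> 1"
  shows "\<bar>mean d powr (1 - a) * binomial_expectation q d gamma_error\<bar>
    \<le> 320 * mean d powr (-1) + 320 * mean d powr (-a)"
proof -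
  define m where "m = mean d"
  have m0: "m > 0" "m \<ge> 1" using m by (auto simp: m_def)
  define M where "M = m powr (1 - a)"
  have M: "M > 0" using m0 by (simp add: M_def)
  have "\<bar>M * gamma_error t\<bar> \<le> 320 / m + 320 * M * (real t / m - 1)^2 + 0 * (real t / m - 1)^4" for t
  proof -
    have "\<bar>M * gamma_error t\<bar> \<le> M * (80 * real t powr (a - 2))"
      using gamma_error_bound[of t] M by (simp add: abs_mult mult_left_mono)
    also have "\<dots> \<le> 80 * (4 / m + 4 * M * (real t / m - 1)^2)"
      using powr_sub_two_deviation_bound[OF m0(2), of t] by (simp add: M_def)
    finally show ?thesis by simp
  qed
  then have "\<bar>binomial_expectation q d (\<lambda>t. M * gamma_error t)\<bar> \<le> 320 / m + 320 * M / m + 4 * 0 / m^2"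
    using M unfolding m_def by (intro binomial_expectation_abs_le_moments[OF m]) auto
  also have "320 / m + 320 * M / m + 4 * 0 / m^2 = 320 * m powr (-1) + 320 * m powr (-a)"
  proof -
    have "M / m = m powr (-a)" "1 / m = m powr (-1)"
      using m0 by (simp_all add: M_def powr_diff powr_minus_divide)
    moreover have "320 / m + 320 * M / m + 4 * 0 / m^2 = 320 * (1 / m) + 320 * (M / m)" by simp
    ultimately show ?thesis by simp
  qed
  finally show ?thesis by (simp add: binomial_expectation_cmult M_def m_def)
qed

lemma scaled_I1q_decomposition:
  assumes d: "0 < d"
  shows "(q / real d) powr a * I1q q (2 * a) d
    = binomial_expectation q d (\<lambda>t. (real t / mean d) powr a)
      - (2 * c / mean d) * binomial_expectation q d (\<lambda>t. (real t / mean d) powr (a - 1))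
      + mean d powr (-a) * binomial_expectation q d gamma_error"
proof -
  define m where "m = mean d"
  have m: "m > 0" using d by (simp add: m_def mean_pos_iff)
  have cancel: "m powr a * (m powr (-a) * x) = x" for x
    using m by (simp add: powr_add[symmetric] mult.assoc[symmetric])
  have "2 powr a * (Gamma (real t / 2 + a) / Gamma (real t / 2))
      = m powr a * (real t / m) powr a - (2 * c / m) * (m powr a * (real t / m) powr (a - 1))
        + gamma_error t" for t
  proof -
    have "m powr a * (real t / m) powr (a - 1) = m * real t powr (a - 1)"
      using m by (simp add: powr_divide powr_diff)
    then show ?thesis using m by (simp add: gamma_error_def powr_divide)
  qed
  then have E: "2 powr a * binomial_expectation q d (\<lambda>t. Gamma (real t / 2 + a) / Gamma (real t / 2))
      = m powr a * binomial_expectation q d (\<lambda>t. (real t / m) powr a)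
        - (2 * c / m) * (m powr a * binomial_expectation q d (\<lambda>t. (real t / m) powr (a - 1)))
        + binomial_expectation q d gamma_error"
    by (simp only: binomial_expectation_linear[symmetric])
  have "(q / real d) powr a * I1q q (2 * a) d = ((q / real d) powr a * q powr (- (2 * a)))
      * (2 powr a * binomial_expectation q d (\<lambda>t. Gamma (real t / 2 + a) / Gamma (real t / 2)))"
    unfolding I1q_eq_binomial_expectation by (simp add: mult_ac)
  also have "(q / real d) powr a * q powr (- (2 * a)) = m powr (-a)"
    using d q_pos by (simp add: m_def mean_def powr_divide powr_minus_divide powr_mult
        powr_add[symmetric] field_simps)
  also note E
  also have "m powr (-a) * (m powr a * binomial_expectation q d (\<lambda>t. (real t / m) powr a)
        - (2 * c / m) * (m powr a * binomial_expectation q d (\<lambda>t. (real t / m) powr (a - 1)))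
        + binomial_expectation q d gamma_error)
      = binomial_expectation q d (\<lambda>t. (real t / m) powr a)
        - (2 * c / m) * binomial_expectation q d (\<lambda>t. (real t / m) powr (a - 1))
        + m powr (-a) * binomial_expectation q d gamma_error"
    by (simp add: algebra_simps cancel)
  finally show ?thesis unfolding m_def .
qed

lemma scaled_I1q_minus_one_eq:
  assumes m: "mean d \<ge> 1"
  shows "real d * ((q / real d) powr a * I1q q (2 * a) d - 1)
    = (mean d * (binomial_expectation q d (\<lambda>t. (real t / mean d) powr a) - 1)
       - 2 * c * binomial_expectation q d (\<lambda>t. (real t / mean d) powr (a - 1))
       + mean d powr (1 - a) * binomial_expectation q d gamma_error) / q"
proof -
  have m0: "mean d > 0" using m by simp
  then have d: "0 < d" by (simp only: mean_pos_iff)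
  have "mean d * mean d powr (-a) = mean d powr (1 - a)"
    using m0 by (simp add: powr_diff powr_minus_divide)
  then have "mean d * ((q / real d) powr a * I1q q (2 * a) d - 1)
      = mean d * (binomial_expectation q d (\<lambda>t. (real t / mean d) powr a) - 1)
        - 2 * c * binomial_expectation q d (\<lambda>t. (real t / mean d) powr (a - 1))
        + mean d powr (1 - a) * binomial_expectation q d gamma_error"
    unfolding scaled_I1q_decomposition[OF d] using m0 by (simp add: algebra_simps)
  then show ?thesis using q_pos by (simp add: mean_def field_simps)
qed

lemma filterlim_mean_at_top: "filterlim mean at_top sequentially"
proof -
  have "filterlim (\<lambda>d. q * real d) at_top sequentially"
    by (rule filterlim_tendsto_pos_mult_at_top[OF tendsto_const q_pos filterlim_real_sequentially])
  moreover have "mean = (\<lambda>d. q * real d)" by (auto simp: mean_def)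
  ultimately show ?thesis by simp
qed

lemma eventually_mean_ge_1: "\<forall>\<^sub>F d in sequentially. 1 \<le> mean d"
  using filterlim_mean_at_top unfolding filterlim_at_top by blast

lemma tendsto_mean_powr_zero: "e < 0 \<Longrightarrow> ((\<lambda>d. mean d powr e) \<longlongrightarrow> 0) sequentially"
  by (rule tendsto_neg_powr[OF _ filterlim_mean_at_top])

lemma tendsto_scaled_I1q:
  "((\<lambda>d. real d * ((q / real d) powr a * I1q q (2 * a) d - 1)) \<longlongrightarrow> - (c * (3 - q) / q)) sequentially"
proof -
  define X1 where "X1 d = binomial_expectation q d (\<lambda>t. (real t / mean d) powr a)" for d
  define X2 where "X2 d = binomial_expectation q d (\<lambda>t. (real t / mean d) powr (a - 1))" for d
  define C where "C d = mean d powr (1 - a) * binomial_expectation q d gamma_error" for d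
  have "\<forall>\<^sub>F d in sequentially. norm (mean d * (X1 d - 1) - - (c * (1 - q))) \<le> 120 * mean d powr (-1/2)"
    using eventually_mean_ge_1 by eventually_elim (use scaled_expectation_powr_expansion in \<open>simp add: X1_def\<close>)
  moreover have "((\<lambda>d. 120 * mean d powr (-1/2)) \<longlongrightarrow> 0) sequentially"
    by (intro tendsto_mult_right_zero tendsto_mean_powr_zero) simp
  ultimately have lim1: "((\<lambda>d. mean d * (X1 d - 1)) \<longlongrightarrow> - (c * (1 - q))) sequentially"
    by (subst LIM_zero_iff[symmetric]) (rule Lim_null_comparison)
  have "\<forall>\<^sub>F d in sequentially. norm (X2 d - 1)
      \<le> 4 * mean d powr (-1/2) + 4 * mean d powr (-a) + 4 * mean d powr (-1)"
    using eventually_mean_ge_1 by eventually_elim (use expectation_powr_pred_expansion in \<open>simp add: X2_def\<close>)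
  moreover have "((\<lambda>d. 4 * mean d powr (-1/2) + 4 * mean d powr (-a) + 4 * mean d powr (-1)) \<longlongrightarrow> 0) sequentially"
    using a_pos by (intro tendsto_add_zero tendsto_mult_right_zero tendsto_mean_powr_zero) auto
  ultimately have lim2: "(X2 \<longlongrightarrow> 1) sequentially"
    by (subst LIM_zero_iff[symmetric]) (rule Lim_null_comparison)
  have "\<forall>\<^sub>F d in sequentially. norm (C d) \<le> 320 * mean d powr (-1) + 320 * mean d powr (-a)"
    using eventually_mean_ge_1 by eventually_elim (use scaled_expectation_gamma_error in \<open>simp add: C_def\<close>)
  moreover have "((\<lambda>d. 320 * mean d powr (-1) + 320 * mean d powr (-a)) \<longlongrightarrow> 0) sequentially"
    using a_pos by (intro tendsto_add_zero tendsto_mult_right_zero tendsto_mean_powr_zero) auto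
  ultimately have lim3: "(C \<longlongrightarrow> 0) sequentially"
    by (rule Lim_null_comparison)
  have "((\<lambda>d. (mean d * (X1 d - 1) - 2 * c * X2 d + C d) / q)
      \<longlongrightarrow> (- (c * (1 - q)) - 2 * c * 1 + 0) / q) sequentially"
    by (intro tendsto_intros lim1 lim2 lim3) (use q_pos in simp)
  moreover have "\<forall>\<^sub>F d in sequentially. (mean d * (X1 d - 1) - 2 * c * X2 d + C d) / q
      = real d * ((q / real d) powr a * I1q q (2 * a) d - 1)"
    using eventually_mean_ge_1 by eventually_elim (simp add: scaled_I1q_minus_one_eq X1_def X2_def C_def)
  moreover have "(- (c * (1 - q)) - 2 * c * 1 + 0) / q = - (c * (3 - q) / q)"
    by (simp add: minus_divide_left algebra_simps)
  ultimately show ?thesis by (simp add: tendsto_cong)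
qed

lemma sigma_bar_expansion:
  "((\<lambda>d. (real d)\<^sup>2 * ((sigma_bar q (2 * a) d)\<^sup>2 - q / real d)) \<longlongrightarrow> (3 - q) * (2 - 2 * a) / 4)
    sequentially"
proof -
  define W where "W d = (q / real d) powr a * I1q q (2 * a) d" for d
  define L where "L = - (c * (3 - q) / q)"
  have lim: "((\<lambda>d. real d * (W d - 1)) \<longlongrightarrow> L) sequentially"
    unfolding W_def L_def by (rule tendsto_scaled_I1q)
  have "L \<noteq> 0" using c_pos q_pos q_le_1 by (simp add: L_def)
  from tendsto_scaled_powr_minus_one[OF lim this, of "-1 / a"]
  have lim_powr: "((\<lambda>d. q * (real d * (W d powr (-1 / a) - 1))) \<longlongrightarrow> q * (-1 / a * L)) sequentially"
    by (rule tendsto_mult_left)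
  have limit_value: "q * (-1 / a * L) = (3 - q) * (2 - 2 * a) / 4"
    using q_pos a_pos by (simp add: L_def c_def field_simps)
  have "\<forall>\<^sub>F d in sequentially. q * (real d * (W d powr (-1 / a) - 1))
      = (real d)\<^sup>2 * ((sigma_bar q (2 * a) d)\<^sup>2 - q / real d)"
    using eventually_gt_at_top[of 0] order_tendstoD(1)[OF tendsto_one_if_scaled_minus_one[OF lim] zero_less_one]
  proof eventually_elim
    case (elim d)
    define Y where "Y = (q / real d) powr a"
    have Y: "Y > 0" using elim q_pos by (simp add: Y_def)
    then have "I1q q (2 * a) d = W d / Y" by (simp add: W_def Y_def)
    then have "(sigma_bar q (2 * a) d)\<^sup>2 = (W d / Y) powr (-1 / a)"
      using elim Y a_pos by (simp add: sigma_bar_power2)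
    also have "\<dots> = W d powr (-1 / a) * Y powr (1 / a)"
      using elim Y by (simp add: powr_divide powr_minus_divide)
    also have "Y powr (1 / a) = q / real d"
      using a_pos q_pos by (simp add: Y_def powr_powr)
    finally show ?case using elim by (simp add: power2_eq_square field_simps)
  qed
  with lim_powr show ?thesis unfolding limit_value by (rule Lim_transform_eventually)
qed

end

theorem mainTheorem13:
  fixes q :: real
  assumes "0 < q" and "q \<le> 1"
  shows "(\<forall>d::nat. d \<ge> 1 \<longrightarrow> (sigma_bar q 2 d)\<^sup>2 = q / real d)
    \<and> (\<forall>s::real. 0 < s \<and> s \<le> 2 \<longrightarrow>
         (\<lambda>d::nat. (sigma_bar q s d)\<^sup>2 - q / real d - (3 - q) * (2 - s) / (4 * (real d)\<^sup>2))
           \<in> o(\<lambda>d. 1 / (real d)\<^sup>2))"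
proof (intro conjI allI impI)
  fix d :: nat
  assume "d \<ge> 1"
  then show "(sigma_bar q 2 d)\<^sup>2 = q / real d" using sigma_bar_two assms by simp
next
  fix s :: real
  assume s: "0 < s \<and> s \<le> 2"
  have "((\<lambda>d. (real d)\<^sup>2 * ((sigma_bar q s d)\<^sup>2 - q / real d)) \<longlongrightarrow> (3 - q) * (2 - s) / 4) sequentially"
  proof (cases "s = 2")
    case True
    then show ?thesis using tendsto_sigma_bar_two assms by simp
  next
    case False
    interpret gamma_binomial "s / 2" q using s False assms by unfold_locales auto
    show ?thesis using sigma_bar_expansion by simp
  qed
  from smallo_inverse_square_if_tendsto[OF this]
  show "(\<lambda>d. (sigma_bar q s d)\<^sup>2 - q / real d - (3 - q) * (2 - s) / (4 * (real d)\<^sup>2))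
      \<in> o(\<lambda>d. 1 / (real d)\<^sup>2)"
    by (simp add: divide_divide_eq_left)
qed

end
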